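(* Consider a discounted MDP with finite state space $\mathcal{S}$, finite action space $\mathcal{A}$, reward vector $r\in\mathbb{R}^{|\mathcal{S}||\mathcal{A}|}$, transition matrix $P\in\mathbb{R}_+^{|\mathcal{S}||\mathcal{A}|\times|\mathcal{S}|}$ with $P_{sa,\tilde s}=\Pr(\tilde s\mid s,a)$, initial state distribution $\mu_0$, and discount factor $\gamma\in[0,1)$. Let $\theta\mapsto\pi_\theta$ be a differentiable parametrized policy, and let $q_\phi\in\mathbb{R}^{|\mathcal{S}||\mathcal{A}|}$ be an arbitrary critic vector (not depending on $\theta$). Define $J(\theta)=(1-\gamma)\mu_0^\top\Pi_\theta q_\theta$, $J_\pi(\theta,\phi)=(1-\gamma)\mu_0^\top\Pi_\theta q_\phi$, the critic residual $\delta_{\theta,\phi}=r-(I-\gamma P\Pi_\theta)q_\phi$, and $\nabla^\phi_\theta J=\sum_s d_{\mathcal{S},\theta}(s)\sum_a q_\phi(s,a)\nabla_\theta\pi_\theta(s,a)$. Then $$\nabla_\theta J-\partial_\theta J_\pi=\nabla_\theta\Big(\sum_{s,a} d_\theta(s,a)\,\delta_{\theta,\phi}(s,a)\Big),$$ where the derivative on the right acts on both $d_\theta$ and $\delta_{\theta,\phi}$ (with $q_\phi$ fixed), and $$\nabla_\theta J-\nabla^\phi_\theta J=\sum_{s,a}\nabla_\theta d_\theta(s,a)\,\delta_{\theta,\phi}(s,a),$$ i.e. the derivative of $\mathbb{E}_{(S,A)\sim d_\theta}[\delta_{\theta,\phi}(S,A)]$ taken only through $d_\theta$, with $\delta_{\theta,\phi}$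 held fixed.
   Context: The policy $\pi_\theta$ is a vector in $\mathbb{R}_+^{|\mathcal{S}||\mathcal{A}|}$ with entries $\pi_\theta(s,a)$, normalized in each state. $\Pi_\theta\in\mathbb{R}^{|\mathcal{S}|\times|\mathcal{S}||\mathcal{A}|}$ is the block-diagonal matrix whose row $s$ contains $\pi_\theta(s,\cdot)^\top$ in the block of state $s$ and zeros elsewhere, so $(\Pi_\theta v)(s)=\sum_a\pi_\theta(s,a)v(s,a)$. $q_\theta=\sum_{i\ge0}(\gamma P\Pi_\theta)^i r$ is the state-action value function of $\pi_\theta$. $d_\theta(s,a)=(1-\gamma)\sum_{i\ge0}\gamma^i\Pr(S_i=s,A_i=a)$ is the discounted state-action visitation distribution when $S_0\sim\mu_0$, actions follow $\pi_\theta$ and transitions follow $P$; $d_{\mathcal{S},\theta}(s)=\sum_a d_\theta(s,a)$. $\partial_\theta J_\pi$ denotes the gradient of $J_\pi$ in $\theta$ with $q_\phi$ held fixed. *)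

theory Defs
  imports "HOL-Analysis.Analysis"
begin

text \<open>Vectors in R^{|S||A|} are functions 's \<Rightarrow> 'a \<Rightarrow> real.
  P s a s' = Pr(s' | s, a).\<close>

definition is_mdp :: "('s::finite \<Rightarrow> 'a::finite \<Rightarrow> 's \<Rightarrow> real) \<Rightarrow> ('s \<Rightarrow> real) \<Rightarrow> real \<Rightarrow> bool" where
  "is_mdp P mu0 \<gamma> \<longleftrightarrow>
     (\<forall>s a s'. P s a s' \<ge> 0) \<and> (\<forall>s a. (\<Sum>s'\<in>UNIV. P s a s') = 1) \<and>
     (\<forall>s. mu0 s \<ge> 0) \<and> (\<Sum>s\<in>UNIV. mu0 s) = 1 \<and> 0 \<le> \<gamma> \<and> \<gamma> < 1"

definition is_policy :: "('s::finite \<Rightarrow> 'a::finite \<Rightarrow> real) \<Rightarrow> bool" where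
  "is_policy p \<longleftrightarrow> (\<forall>s a. p s a \<ge> 0) \<and> (\<forall>s. (\<Sum>a\<in>UNIV. p s a) = 1)"

definition PiOp :: "('s::finite \<Rightarrow> 'a::finite \<Rightarrow> real) \<Rightarrow> ('s \<Rightarrow> 'a \<Rightarrow> real) \<Rightarrow> 's \<Rightarrow> real" where
  "PiOp p v s = (\<Sum>a\<in>UNIV. p s a * v s a)"

definition PPiOp :: "('s::finite \<Rightarrow> 'a::finite \<Rightarrow> 's \<Rightarrow> real) \<Rightarrow> ('s \<Rightarrow> 'a \<Rightarrow> real)
     \<Rightarrow> ('s \<Rightarrow> 'a \<Rightarrow> real) \<Rightarrow> 's \<Rightarrow> 'a \<Rightarrow> real" where
  "PPiOp P p v s a = (\<Sum>s'\<in>UNIV. P s a s' * PiOp p v s')"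

definition qfun :: "('s::finite \<Rightarrow> 'a::finite \<Rightarrow> 's \<Rightarrow> real) \<Rightarrow> real \<Rightarrow> ('s \<Rightarrow> 'a \<Rightarrow> real)
     \<Rightarrow> ('s \<Rightarrow> 'a \<Rightarrow> real) \<Rightarrow> 's \<Rightarrow> 'a \<Rightarrow> real" where
  "qfun P \<gamma> r p s a = (\<Sum>i. \<gamma> ^ i * ((PPiOp P p) ^^ i) r s a)"

text \<open>Pr(S_i = s) under initial distribution mu0, policy p, transitions P.\<close>
fun state_dist :: "('s::finite \<Rightarrow> 'a::finite \<Rightarrow> 's \<Rightarrow> real) \<Rightarrow> ('s \<Rightarrow> real)
     \<Rightarrow> ('s \<Rightarrow> 'a \<Rightarrow> real) \<Rightarrow> nat \<Rightarrow> 's \<Rightarrow> real" where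
  "state_dist P mu0 p 0 s = mu0 s"
| "state_dist P mu0 p (Suc i) s' = (\<Sum>s\<in>UNIV. \<Sum>a\<in>UNIV. state_dist P mu0 p i s * p s a * P s a s')"

definition dvisit :: "('s::finite \<Rightarrow> 'a::finite \<Rightarrow> 's \<Rightarrow> real) \<Rightarrow> ('s \<Rightarrow> real) \<Rightarrow> real
     \<Rightarrow> ('s \<Rightarrow> 'a \<Rightarrow> real) \<Rightarrow> 's \<Rightarrow> 'a \<Rightarrow> real" where
  "dvisit P mu0 \<gamma> p s a = (1 - \<gamma>) * (\<Sum>i. \<gamma> ^ i * (state_dist P mu0 p i s * p s a))"

definition dSvisit :: "('s::finite \<Rightarrow> 'a::finite \<Rightarrow> 's \<Rightarrow> real) \<Rightarrow> ('s \<Rightarrow> real) \<Rightarrow> real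
     \<Rightarrow> ('s \<Rightarrow> 'a \<Rightarrow> real) \<Rightarrow> 's \<Rightarrow> real" where
  "dSvisit P mu0 \<gamma> p s = (\<Sum>a\<in>UNIV. dvisit P mu0 \<gamma> p s a)"

definition Jobj :: "('s::finite \<Rightarrow> 'a::finite \<Rightarrow> 's \<Rightarrow> real) \<Rightarrow> ('s \<Rightarrow> real) \<Rightarrow> real
     \<Rightarrow> ('s \<Rightarrow> 'a \<Rightarrow> real) \<Rightarrow> ('s \<Rightarrow> 'a \<Rightarrow> real) \<Rightarrow> real" where
  "Jobj P mu0 \<gamma> r p = (1 - \<gamma>) * (\<Sum>s\<in>UNIV. mu0 s * PiOp p (qfun P \<gamma> r p) s)"

definition Jpi :: "('s::finite \<Rightarrow> real) \<Rightarrow> real \<Rightarrow> ('s \<Rightarrow> 'a::finite \<Rightarrow> real)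
     \<Rightarrow> ('s \<Rightarrow> 'a \<Rightarrow> real) \<Rightarrow> real" where
  "Jpi mu0 \<gamma> p qphi = (1 - \<gamma>) * (\<Sum>s\<in>UNIV. mu0 s * PiOp p qphi s)"

definition residual :: "('s::finite \<Rightarrow> 'a::finite \<Rightarrow> 's \<Rightarrow> real) \<Rightarrow> real \<Rightarrow> ('s \<Rightarrow> 'a \<Rightarrow> real)
     \<Rightarrow> ('s \<Rightarrow> 'a \<Rightarrow> real) \<Rightarrow> ('s \<Rightarrow> 'a \<Rightarrow> real) \<Rightarrow> 's \<Rightarrow> 'a \<Rightarrow> real" where
  "residual P \<gamma> r p qphi s a = r s a - (qphi s a - \<gamma> * PPiOp P p qphi s a)"

end

theory Submission
  imports Defs
begin

text \<open>
  Write \<open>d\<^sub>S = (1 - \<gamma>) v\<close> with \<open>v = \<Sum>\<^sub>i \<gamma>\<^sup>i Pr(S\<^sub>i = \<cdot>)\<close>; it satisfies the flow equation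
  \<open>v = \<mu>\<^sub>0 + \<gamma> (\<Pi> P)\<^sup>T v\<close>. Integrating against \<open>d\<close> and using this equation gives
  \<open>E\<^sub>d[(I - \<gamma> P \<Pi>) f] = (1 - \<gamma>) \<mu>\<^sub>0\<^sup>T \<Pi> f\<close> for every \<open>f\<close>. For \<open>f = q\<^sub>\<theta>\<close>, where the Bellman
  equation gives \<open>(I - \<gamma> P \<Pi>) q\<^sub>\<theta> = r\<close>, and for \<open>f = q\<^sub>\<phi>\<close>, this says \<open>E\<^sub>d[\<delta>] = J - J\<^sub>\<pi>\<close> for
  every \<open>\<theta>\<close>; differentiating yields the first identity.

  The flow equation also gives differentiability of \<open>d\<close>: its matrix \<open>I - \<gamma> (\<Pi> P)\<^sup>T\<close> is
  nonsingular since \<open>(\<Pi> P)\<^sup>T\<close> is column-stochastic and \<open>\<gamma> < 1\<close>, so Cramer's rule writes \<open>v\<close> as a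
  quotient of determinants that are polynomials in \<open>\<pi>\<^sub>\<theta>\<close>.

  For the second identity, the part of \<open>\<nabla>E\<^sub>d[\<delta>]\<close> that differentiates \<open>\<delta>\<close> is
  \<open>E\<^sub>d[\<gamma> P \<Pi>' q\<^sub>\<phi>]\<close>; by the flow equation it equals \<open>\<Sum>\<^sub>s (d\<^sub>S(s) - (1 - \<gamma>) \<mu>\<^sub>0(s)) (\<Pi>' q\<^sub>\<phi>)(s)\<close>,
  whose \<open>\<mu>\<^sub>0\<close>-part is \<open>\<partial>\<^sub>\<theta>J\<^sub>\<pi>\<close> and whose \<open>d\<^sub>S\<close>-part is \<open>\<nabla>\<^sup>\<phi>\<^sub>\<theta>J\<close>.
\<close>

section \<open>Discounted occupancy\<close>

lemma state_dist_nonneg: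
  assumes "is_mdp P mu0 \<gamma>" "is_policy p"
  shows "0 \<le> state_dist P mu0 p i s"
  using assms
  by (induction i arbitrary: s) (auto simp: is_mdp_def is_policy_def intro!: sum_nonneg)

lemma sum_state_dist_eq_1:
  assumes "is_mdp P mu0 \<gamma>" "is_policy p"
  shows "(\<Sum>s\<in>UNIV. state_dist P mu0 p i s) = 1"
proof (induction i)
  case 0
  then show ?case using assms by (simp add: is_mdp_def)
next
  case (Suc i)
  have "(\<Sum>s'\<in>UNIV. state_dist P mu0 p (Suc i) s')
      = (\<Sum>s\<in>UNIV. \<Sum>a\<in>UNIV. state_dist P mu0 p i s * p s a * (\<Sum>s'\<in>UNIV. P s a s'))"
    by (simp add: sum_distrib_left) (subst sum.swap, rule sum.cong[OF refl], rule sum.swap)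
  also have "\<dots> = (\<Sum>s\<in>UNIV. state_dist P mu0 p i s * (\<Sum>a\<in>UNIV. p s a))"
    using assms by (simp add: is_mdp_def sum_distrib_left)
  finally show ?case using Suc assms by (simp add: is_policy_def)
qed

lemma state_dist_le_1:
  assumes "is_mdp P mu0 \<gamma>" "is_policy p"
  shows "state_dist P mu0 p i s \<le> 1"
proof -
  have "state_dist P mu0 p i s \<le> (\<Sum>s\<in>UNIV. state_dist P mu0 p i s)"
    by (rule member_le_sum) (auto intro: state_dist_nonneg[OF assms])
  then show ?thesis using sum_state_dist_eq_1[OF assms] by simp
qed

lemma summable_discounted_state_dist:
  assumes "is_mdp P mu0 \<gamma>" "is_policy p"
  shows "summable (\<lambda>i. \<gamma> ^ i * state_dist P mu0 p i s)"
proof (rule summable_comparison_test[of _ "\<lambda>i. \<gamma> ^ i"])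
  have "0 \<le> \<gamma>" "\<gamma> < 1" using assms by (auto simp: is_mdp_def)
  then show "\<exists>N. \<forall>n\<ge>N. norm (\<gamma> ^ n * state_dist P mu0 p n s) \<le> \<gamma> ^ n"
    and "summable (\<lambda>i. \<gamma> ^ i)"
    using state_dist_nonneg[OF assms] state_dist_le_1[OF assms]
    by (auto simp: abs_mult intro!: mult_left_le)
qed

definition occupancy :: "('s::finite \<Rightarrow> 'a::finite \<Rightarrow> 's \<Rightarrow> real) \<Rightarrow> ('s \<Rightarrow> real) \<Rightarrow> real
     \<Rightarrow> ('s \<Rightarrow> 'a \<Rightarrow> real) \<Rightarrow> 's \<Rightarrow> real" where
  "occupancy P mu0 \<gamma> p s = (\<Sum>i. \<gamma> ^ i * state_dist P mu0 p i s)"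

lemma occupancy_flow:
  assumes "is_mdp P mu0 \<gamma>" "is_policy p"
  shows "occupancy P mu0 \<gamma> p s'
    = mu0 s' + \<gamma> * (\<Sum>s\<in>UNIV. \<Sum>a\<in>UNIV. occupancy P mu0 \<gamma> p s * p s a * P s a s')"
proof -
  let ?f = "\<lambda>n s. \<gamma> ^ n * state_dist P mu0 p n s"
  note summable = summable_discounted_state_dist[OF assms]
  have "(\<Sum>n. ?f (Suc n) s') = (\<Sum>n. \<gamma> * (\<Sum>s\<in>UNIV. \<Sum>a\<in>UNIV. ?f n s * (p s a * P s a s')))"
    by (simp add: sum_distrib_left mult_ac)
  also have "\<dots> = \<gamma> * (\<Sum>s\<in>UNIV. \<Sum>a\<in>UNIV. \<Sum>n. ?f n s * (p s a * P s a s'))"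
    by (simp add: suminf_mult summable_sum summable_mult2 summable suminf_sum)
  also have "\<dots> = \<gamma> * (\<Sum>s\<in>UNIV. \<Sum>a\<in>UNIV. occupancy P mu0 \<gamma> p s * p s a * P s a s')"
    unfolding suminf_mult2[OF summable, symmetric] occupancy_def[symmetric] by (simp add: mult.assoc)
  finally show ?thesis
    using suminf_split_head[OF summable[of s']] by (simp add: occupancy_def)
qed

lemma dvisit_eq_occupancy:
  assumes "is_mdp P mu0 \<gamma>" "is_policy p"
  shows "dvisit P mu0 \<gamma> p s a = (1 - \<gamma>) * occupancy P mu0 \<gamma> p s * p s a"
  using suminf_mult2[OF summable_discounted_state_dist[OF assms], of s "p s a"]
  by (simp add: dvisit_def occupancy_def mult.assoc)

lemma dSvisit_eq_occupancy:
  assumes "is_mdp P mu0 \<gamma>" "is_policy p"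
  shows "dSvisit P mu0 \<gamma> p s = (1 - \<gamma>) * occupancy P mu0 \<gamma> p s"
  using assms(2)
  by (simp add: dSvisit_def dvisit_eq_occupancy[OF assms] is_policy_def flip: sum_distrib_left)

lemma dvisit_eq_dSvisit:
  assumes "is_mdp P mu0 \<gamma>" "is_policy p"
  shows "dvisit P mu0 \<gamma> p s a = dSvisit P mu0 \<gamma> p s * p s a"
  by (simp add: dvisit_eq_occupancy[OF assms] dSvisit_eq_occupancy[OF assms])

lemma dSvisit_flow:
  assumes "is_mdp P mu0 \<gamma>" "is_policy p"
  shows "dSvisit P mu0 \<gamma> p s'
    = (1 - \<gamma>) * mu0 s' + \<gamma> * (\<Sum>s\<in>UNIV. \<Sum>a\<in>UNIV. dvisit P mu0 \<gamma> p s a * P s a s')"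
  unfolding dSvisit_eq_occupancy[OF assms] dvisit_eq_occupancy[OF assms]
  by (subst occupancy_flow[OF assms]) (simp add: algebra_simps sum_distrib_left)

section \<open>Bellman equation\<close>

lemma abs_PPiOp_le:
  assumes "is_mdp P mu0 \<gamma>" "is_policy p" "\<And>s a. \<bar>f s a\<bar> \<le> B"
  shows "\<bar>PPiOp P p f s a\<bar> \<le> B"
proof -
  have PiOp_le: "\<bar>PiOp p f s'\<bar> \<le> B" for s'
  proof -
    have "\<bar>PiOp p f s'\<bar> \<le> (\<Sum>a\<in>UNIV. p s' a * B)"
      unfolding PiOp_def using assms
      by (intro order.trans[OF sum_abs] sum_mono) (auto simp: abs_mult is_policy_def intro: mult_left_mono)
    also have "\<dots> = B" using assms(2) by (simp add: is_policy_def flip: sum_distrib_right)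
    finally show ?thesis .
  qed
  have "\<bar>PPiOp P p f s a\<bar> \<le> (\<Sum>s'\<in>UNIV. P s a s' * B)"
    unfolding PPiOp_def using assms PiOp_le
    by (intro order.trans[OF sum_abs] sum_mono) (auto simp: abs_mult is_mdp_def intro: mult_left_mono)
  also have "\<dots> = B" using assms(1) by (simp add: is_mdp_def flip: sum_distrib_right)
  finally show ?thesis .
qed

lemma summable_qfun_series:
  assumes "is_mdp P mu0 \<gamma>" "is_policy p"
  shows "summable (\<lambda>i. \<gamma> ^ i * ((PPiOp P p) ^^ i) r s a)"
proof -
  define B where "B = (\<Sum>s\<in>UNIV. \<Sum>a\<in>UNIV. \<bar>r s a\<bar>)"
  have r_le: "\<bar>r s a\<bar> \<le> B" for s a
  proof -
    have "\<bar>r s a\<bar> \<le> (\<Sum>a\<in>UNIV. \<bar>r s a\<bar>)" by (rule member_le_sum) auto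
    also have "\<dots> \<le> B"
      unfolding B_def by (rule member_le_sum[of s UNIV "\<lambda>s. \<Sum>a\<in>UNIV. \<bar>r s a\<bar>"]) (auto intro: sum_nonneg)
    finally show ?thesis .
  qed
  have bound: "\<bar>((PPiOp P p) ^^ i) r s a\<bar> \<le> B" for i s a
  proof (induction i arbitrary: s a)
    case 0
    show ?case using r_le by simp
  next
    case (Suc i)
    show ?case using abs_PPiOp_le[OF assms Suc.IH] by simp
  qed
  have \<gamma>: "0 \<le> \<gamma>" "\<gamma> < 1" using assms by (auto simp: is_mdp_def)
  show ?thesis
    by (rule summable_comparison_test[of _ "\<lambda>i. \<gamma> ^ i * B", OF _ summable_mult2])
      (simp_all add: \<gamma> abs_mult mult_left_mono bound)
qed

lemma qfun_bellman:
  assumes "is_mdp P mu0 \<gamma>" "is_policy p"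
  shows "qfun P \<gamma> r p s a = r s a + \<gamma> * PPiOp P p (qfun P \<gamma> r p) s a"
proof -
  let ?g = "\<lambda>n s a. \<gamma> ^ n * ((PPiOp P p) ^^ n) r s a"
  note summable = summable_qfun_series[OF assms, of r]
  have "(\<Sum>n. ?g (Suc n) s a) = (\<Sum>n. \<gamma> * (\<Sum>s'\<in>UNIV. \<Sum>a'\<in>UNIV. ?g n s' a' * (P s a s' * p s' a')))"
    by (simp add: PPiOp_def PiOp_def sum_distrib_left mult_ac)
  also have "\<dots> = \<gamma> * (\<Sum>n. \<Sum>s'\<in>UNIV. \<Sum>a'\<in>UNIV. ?g n s' a' * (P s a s' * p s' a'))"
    by (intro suminf_mult summable_sum summable_mult2 summable)
  also have "\<dots> = \<gamma> * (\<Sum>s'\<in>UNIV. \<Sum>a'\<in>UNIV. \<Sum>n. ?g n s' a' * (P s a s' * p s' a'))"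
    by (subst suminf_sum) (intro summable_sum summable_mult2 summable,
        intro arg_cong[where f="(*) \<gamma>"] sum.cong refl suminf_sum summable_mult2 summable)
  also have "\<dots> = \<gamma> * PPiOp P p (qfun P \<gamma> r p) s a"
    unfolding suminf_mult2[OF summable, symmetric] qfun_def[symmetric]
    by (simp add: PPiOp_def PiOp_def sum_distrib_left mult_ac)
  finally show ?thesis
    using suminf_split_head[OF summable[of s a]] by (simp add: qfun_def)
qed

section \<open>Expected residual\<close>

lemma sum_dvisit_mult_eq_sum_dSvisit_PiOp:
  assumes "is_mdp P mu0 \<gamma>" "is_policy p"
  shows "(\<Sum>s\<in>UNIV. \<Sum>a\<in>UNIV. dvisit P mu0 \<gamma> p s a * f s a)
    = (\<Sum>s\<in>UNIV. dSvisit P mu0 \<gamma> p s * PiOp p f s)"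
  by (simp add: dvisit_eq_dSvisit[OF assms] PiOp_def sum_distrib_left mult.assoc)

lemma sum_dvisit_PPiOp:
  assumes "is_mdp P mu0 \<gamma>" "is_policy p"
  shows "(\<Sum>s\<in>UNIV. \<Sum>a\<in>UNIV. dvisit P mu0 \<gamma> p s a * (\<gamma> * PPiOp P p' f s a))
    = (\<Sum>s'\<in>UNIV. (dSvisit P mu0 \<gamma> p s' - (1 - \<gamma>) * mu0 s') * PiOp p' f s')"
proof -
  let ?d = "dvisit P mu0 \<gamma> p"
  have "(\<Sum>s\<in>UNIV. \<Sum>a\<in>UNIV. ?d s a * (\<gamma> * PPiOp P p' f s a))
      = (\<Sum>s\<in>UNIV. \<Sum>a\<in>UNIV. \<Sum>s'\<in>UNIV. \<gamma> * ?d s a * P s a s' * PiOp p' f s')"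
    by (simp add: PPiOp_def sum_distrib_left mult_ac)
  also have "\<dots> = (\<Sum>s'\<in>UNIV. (\<gamma> * (\<Sum>s\<in>UNIV. \<Sum>a\<in>UNIV. ?d s a * P s a s')) * PiOp p' f s')"
    by (simp add: sum_distrib_left sum_distrib_right mult_ac)
      (subst (2) sum.swap, rule sum.cong[OF refl], rule sum.swap)
  finally show ?thesis by (simp add: dSvisit_flow[OF assms])
qed

lemma sum_dvisit_bellman_operator:
  assumes "is_mdp P mu0 \<gamma>" "is_policy p"
  shows "(\<Sum>s\<in>UNIV. \<Sum>a\<in>UNIV. dvisit P mu0 \<gamma> p s a * (f s a - \<gamma> * PPiOp P p f s a))
    = (1 - \<gamma>) * (\<Sum>s\<in>UNIV. mu0 s * PiOp p f s)"
  by (simp add: right_diff_distrib sum_subtractf sum_dvisit_PPiOp[OF assms]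
      sum_dvisit_mult_eq_sum_dSvisit_PiOp[OF assms] left_diff_distrib sum_distrib_left mult.assoc)

lemma sum_dvisit_residual:
  assumes "is_mdp P mu0 \<gamma>" "is_policy p"
  shows "(\<Sum>s\<in>UNIV. \<Sum>a\<in>UNIV. dvisit P mu0 \<gamma> p s a * residual P \<gamma> r p qphi s a)
    = Jobj P mu0 \<gamma> r p - Jpi mu0 \<gamma> p qphi"
proof -
  let ?q = "qfun P \<gamma> r p"
  have "residual P \<gamma> r p qphi s a
      = (?q s a - \<gamma> * PPiOp P p ?q s a) - (qphi s a - \<gamma> * PPiOp P p qphi s a)" for s a
    by (subst qfun_bellman[OF assms]) (simp add: residual_def)
  then have "(\<Sum>s\<in>UNIV. \<Sum>a\<in>UNIV. dvisit P mu0 \<gamma> p s a * residual P \<gamma> r p qphi s a)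
      = (\<Sum>s\<in>UNIV. \<Sum>a\<in>UNIV. dvisit P mu0 \<gamma> p s a * (?q s a - \<gamma> * PPiOp P p ?q s a))
      - (\<Sum>s\<in>UNIV. \<Sum>a\<in>UNIV. dvisit P mu0 \<gamma> p s a * (qphi s a - \<gamma> * PPiOp P p qphi s a))"
    by (simp only: sum_subtractf[symmetric] right_diff_distrib[symmetric])
  also have "\<dots> = (1 - \<gamma>) * (\<Sum>s\<in>UNIV. mu0 s * PiOp p ?q s) - (1 - \<gamma>) * (\<Sum>s\<in>UNIV. mu0 s * PiOp p qphi s)"
    by (simp only: sum_dvisit_bellman_operator[OF assms])
  finally show ?thesis by (simp add: Jobj_def Jpi_def)
qed

section \<open>Differentiability of the visitation distribution\<close>

lemma det_mat1_minus_substochastic_nonzero: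
  fixes A :: "real^'n^'n"
  assumes nonneg: "\<And>i j. 0 \<le> A $ i $ j" and column_sum: "\<And>j. (\<Sum>i\<in>UNIV. A $ i $ j) \<le> 1"
    and c: "\<bar>c\<bar> < 1"
  shows "det (mat 1 - c *\<^sub>R A) \<noteq> 0"
proof -
  have "y = 0" if "(mat 1 - c *\<^sub>R A) *v y = 0" for y
  proof -
    from that have y: "y = c *\<^sub>R (A *v y)"
      by (simp add: matrix_vector_mult_diff_rdistrib scaleR_matrix_vector_assoc)
    have "(\<Sum>i\<in>UNIV. \<bar>y $ i\<bar>) \<le> (\<Sum>i\<in>UNIV. \<bar>c\<bar> * (\<Sum>j\<in>UNIV. A $ i $ j * \<bar>y $ j\<bar>))"
    proof (rule sum_mono)
      fix i
      have "\<bar>y $ i\<bar> = \<bar>c\<bar> * \<bar>\<Sum>j\<in>UNIV. A $ i $ j * y $ j\<bar>"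
        by (subst y) (simp add: matrix_vector_mult_def abs_mult)
      also have "\<dots> \<le> \<bar>c\<bar> * (\<Sum>j\<in>UNIV. A $ i $ j * \<bar>y $ j\<bar>)"
        using nonneg by (intro mult_left_mono order.trans[OF sum_abs]) (auto simp: abs_mult)
      finally show "\<bar>y $ i\<bar> \<le> \<bar>c\<bar> * (\<Sum>j\<in>UNIV. A $ i $ j * \<bar>y $ j\<bar>)" .
    qed
    also have "\<dots> = \<bar>c\<bar> * (\<Sum>j\<in>UNIV. \<bar>y $ j\<bar> * (\<Sum>i\<in>UNIV. A $ i $ j))"
      by (simp add: sum_distrib_left sum_distrib_right mult_ac) (rule sum.swap)
    also have "\<dots> \<le> \<bar>c\<bar> * (\<Sum>j\<in>UNIV. \<bar>y $ j\<bar>)"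
      using column_sum by (intro mult_left_mono sum_mono) (auto intro: mult_left_le)
    finally have "(1 - \<bar>c\<bar>) * (\<Sum>i\<in>UNIV. \<bar>y $ i\<bar>) \<le> 0" by (simp add: algebra_simps)
    then have "(\<Sum>i\<in>UNIV. \<bar>y $ i\<bar>) = 0"
      using c by (simp add: mult_le_0_iff order_antisym sum_nonneg)
    then show ?thesis by (simp add: sum_nonneg_eq_0_iff vec_eq_iff)
  qed
  then show ?thesis
    by (simp add: invertible_det_nz[symmetric] invertible_left_inverse matrix_left_invertible_ker)
qed

lemma differentiable_prod:
  fixes f :: "'i \<Rightarrow> 'p::real_normed_vector \<Rightarrow> 'b::real_normed_field"
  shows "finite I \<Longrightarrow> (\<And>i. i \<in> I \<Longrightarrow> f i differentiable (at x within S))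
    \<Longrightarrow> (\<lambda>t. \<Prod>i\<in>I. f i t) differentiable (at x within S)"
  by (induction I rule: finite_induct) (auto intro!: differentiable_mult)

lemma differentiable_det:
  fixes A :: "'p::real_normed_vector \<Rightarrow> 'b::real_normed_field^'n^'n"
  assumes "\<And>i j. (\<lambda>t. A t $ i $ j) differentiable (at x within S)"
  shows "(\<lambda>t. det (A t)) differentiable (at x within S)"
  unfolding det_def
  by (intro differentiable_sum ballI differentiable_mult differentiable_const differentiable_prod assms)
    auto

lemma differentiable_linear_solution:
  fixes A :: "'p::real_normed_vector \<Rightarrow> real^'n^'n" and x b :: "'p \<Rightarrow> real^'n"
  assumes solution: "\<And>t. A t *v x t = b t" and nonsingular: "\<And>t. det (A t) \<noteq> 0"
    and "\<And>i j. (\<lambda>t. A t $ i $ j) differentiable (at \<theta>)"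
    and "\<And>i. (\<lambda>t. b t $ i) differentiable (at \<theta>)"
  shows "(\<lambda>t. x t $ k) differentiable (at \<theta>)"
proof -
  have entries: "(\<lambda>t. if j = k then b t $ i else A t $ i $ j) differentiable (at \<theta>)" for i j
    using assms by (cases "j = k") simp_all
  have "x t $ k = det (\<chi> i j. if j = k then b t $ i else A t $ i $ j) / det (A t)" for t
    using cramer[OF nonsingular[of t]] solution[of t] by simp
  moreover have "(\<lambda>t. det (\<chi> i j. if j = k then b t $ i else A t $ i $ j) / det (A t))
      differentiable (at \<theta>)"
    using assms entries by (intro differentiable_divide differentiable_det) simp_all
  ultimately show ?thesis by simp
qed

text \<open>The transpose of \<open>\<Pi> P\<close>: column \<open>s\<close> is the next-state law from \<open>s\<close>.\<close>

definition transition_matrix :: "('s::finite \<Rightarrow> 'a::finite \<Rightarrow> 's \<Rightarrow> real)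
     \<Rightarrow> ('s \<Rightarrow> 'a \<Rightarrow> real) \<Rightarrow> real^'s^'s" where
  "transition_matrix P p = (\<chi> s' s. \<Sum>a\<in>UNIV. p s a * P s a s')"

lemma det_flow_matrix_nonzero:
  assumes "is_mdp P mu0 \<gamma>" "is_policy p"
  shows "det (mat 1 - \<gamma> *\<^sub>R transition_matrix P p) \<noteq> 0"
proof (rule det_mat1_minus_substochastic_nonzero)
  show "0 \<le> transition_matrix P p $ i $ j" for i j
    using assms by (auto simp: transition_matrix_def is_mdp_def is_policy_def intro!: sum_nonneg)
  show "(\<Sum>i\<in>UNIV. transition_matrix P p $ i $ j) \<le> 1" for j
  proof -
    have "(\<Sum>i\<in>UNIV. transition_matrix P p $ i $ j) = (\<Sum>a\<in>UNIV. p j a * (\<Sum>i\<in>UNIV. P j a i))"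
      by (simp add: transition_matrix_def sum_distrib_left) (rule sum.swap)
    then show ?thesis using assms by (simp add: is_mdp_def is_policy_def)
  qed
  show "\<bar>\<gamma>\<bar> < 1" using assms by (simp add: is_mdp_def)
qed

lemma flow_matrix_mult_dSvisit:
  assumes "is_mdp P mu0 \<gamma>" "is_policy p"
  shows "(mat 1 - \<gamma> *\<^sub>R transition_matrix P p) *v (\<chi> s. dSvisit P mu0 \<gamma> p s)
    = (\<chi> s. (1 - \<gamma>) * mu0 s)"
proof -
  let ?v = "\<chi> s. dSvisit P mu0 \<gamma> p s"
  have "((mat 1 - \<gamma> *\<^sub>R transition_matrix P p) *v ?v) $ s' = (1 - \<gamma>) * mu0 s'" for s'
  proof -
    have "(transition_matrix P p *v ?v) $ s' = (\<Sum>s\<in>UNIV. \<Sum>a\<in>UNIV. dvisit P mu0 \<gamma> p s a * P s a s')"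
      by (simp add: matrix_vector_mult_def transition_matrix_def dvisit_eq_dSvisit[OF assms]
          sum_distrib_left sum_distrib_right mult_ac)
    then have "((mat 1 - \<gamma> *\<^sub>R transition_matrix P p) *v ?v) $ s'
        = dSvisit P mu0 \<gamma> p s' - \<gamma> * (\<Sum>s\<in>UNIV. \<Sum>a\<in>UNIV. dvisit P mu0 \<gamma> p s a * P s a s')"
      by (simp add: matrix_vector_mult_diff_rdistrib flip: scaleR_matrix_vector_assoc)
    also have "\<dots> = (1 - \<gamma>) * mu0 s'"
      using dSvisit_flow[OF assms, of s'] by simp
    finally show ?thesis .
  qed
  then show ?thesis by (simp add: vec_eq_iff)
qed

lemma dSvisit_differentiable:
  fixes pi :: "'p::real_normed_vector \<Rightarrow> 's::finite \<Rightarrow> 'a::finite \<Rightarrow> real"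
  assumes "is_mdp P mu0 \<gamma>" "\<And>t. is_policy (pi t)"
    and "\<And>s a. (\<lambda>t. pi t s a) differentiable (at \<theta>)"
  shows "(\<lambda>t. dSvisit P mu0 \<gamma> (pi t) s) differentiable (at \<theta>)"
proof -
  have "(\<lambda>t. (\<chi> s. dSvisit P mu0 \<gamma> (pi t) s) $ s) differentiable (at \<theta>)"
    by (rule differentiable_linear_solution[OF flow_matrix_mult_dSvisit[OF assms(1,2)]
          det_flow_matrix_nonzero[OF assms(1,2)]])
      (auto simp: assms(3) transition_matrix_def mat_def intro!: derivative_intros)
  then show ?thesis by simp
qed

lemma dvisit_differentiable:
  fixes pi :: "'p::real_normed_vector \<Rightarrow> 's::finite \<Rightarrow> 'a::finite \<Rightarrow> real"
  assumes "is_mdp P mu0 \<gamma>" "\<And>t. is_policy (pi t)"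
    and "\<And>s a. (\<lambda>t. pi t s a) differentiable (at \<theta>)"
  shows "(\<lambda>t. dvisit P mu0 \<gamma> (pi t) s a) differentiable (at \<theta>)"
  using assms by (simp add: dvisit_eq_dSvisit dSvisit_differentiable)

section \<open>Derivatives in the policy\<close>

lemma has_derivative_PiOp:
  fixes pi :: "'p::real_normed_vector \<Rightarrow> 's::finite \<Rightarrow> 'a::finite \<Rightarrow> real"
  assumes "\<And>s a. ((\<lambda>t. pi t s a) has_derivative Dpi s a) F"
  shows "((\<lambda>t. PiOp (pi t) v s) has_derivative (\<lambda>h. PiOp (\<lambda>s a. Dpi s a h) v s)) F"
  unfolding PiOp_def by (intro has_derivative_sum has_derivative_mult_left assms)

lemma has_derivative_PPiOp:
  fixes pi :: "'p::real_normed_vector \<Rightarrow> 's::finite \<Rightarrow> 'a::finite \<Rightarrow> real"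
  assumes "\<And>s a. ((\<lambda>t. pi t s a) has_derivative Dpi s a) F"
  shows "((\<lambda>t. PPiOp P (pi t) v s a) has_derivative (\<lambda>h. PPiOp P (\<lambda>s a. Dpi s a h) v s a)) F"
  unfolding PPiOp_def by (intro has_derivative_sum has_derivative_mult_right has_derivative_PiOp assms)

lemma has_derivative_Jpi:
  fixes pi :: "'p::real_normed_vector \<Rightarrow> 's::finite \<Rightarrow> 'a::finite \<Rightarrow> real"
  assumes "\<And>s a. ((\<lambda>t. pi t s a) has_derivative Dpi s a) F"
  shows "((\<lambda>t. Jpi mu0 \<gamma> (pi t) qphi)
    has_derivative (\<lambda>h. (1 - \<gamma>) * (\<Sum>s\<in>UNIV. mu0 s * PiOp (\<lambda>s a. Dpi s a h) qphi s))) F"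
  unfolding Jpi_def by (intro has_derivative_mult_right has_derivative_sum has_derivative_PiOp assms)

lemma has_derivative_residual:
  fixes pi :: "'p::real_normed_vector \<Rightarrow> 's::finite \<Rightarrow> 'a::finite \<Rightarrow> real"
  assumes "\<And>s a. ((\<lambda>t. pi t s a) has_derivative Dpi s a) F"
  shows "((\<lambda>t. residual P \<gamma> r (pi t) qphi s a)
    has_derivative (\<lambda>h. \<gamma> * PPiOp P (\<lambda>s a. Dpi s a h) qphi s a)) F"
proof -
  have "((\<lambda>t. r s a - (qphi s a - \<gamma> * PPiOp P (pi t) qphi s a))
      has_derivative (\<lambda>h. 0 - (0 - \<gamma> * PPiOp P (\<lambda>s a. Dpi s a h) qphi s a))) F"
    by (intro has_derivative_diff has_derivative_const has_derivative_mult_right has_derivative_PPiOp assms)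
  then show ?thesis by (simp add: residual_def)
qed

theorem theorem1:
  fixes P :: "'s::finite \<Rightarrow> 'a::finite \<Rightarrow> 's \<Rightarrow> real"
    and mu0 :: "'s \<Rightarrow> real" and \<gamma> :: real and r :: "'s \<Rightarrow> 'a \<Rightarrow> real"
    and pi :: "'p::euclidean_space \<Rightarrow> 's \<Rightarrow> 'a \<Rightarrow> real"
    and qphi :: "'s \<Rightarrow> 'a \<Rightarrow> real"
    and \<theta> :: 'p
    and Dpi :: "'s \<Rightarrow> 'a \<Rightarrow> 'p \<Rightarrow> real"
  assumes mdp: "is_mdp P mu0 \<gamma>"
    and pol: "\<And>t. is_policy (pi t)"
    and diff: "\<And>t s a. (\<lambda>u. pi u s a) differentiable (at t)"
    and Dpi: "\<And>s a. ((\<lambda>u. pi u s a) has_derivative Dpi s a) (at \<theta>)"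
  shows "\<exists>DJ DJpi DE Dd.
     ((\<lambda>t. Jobj P mu0 \<gamma> r (pi t)) has_derivative DJ) (at \<theta>)
   \<and> ((\<lambda>t. Jpi mu0 \<gamma> (pi t) qphi) has_derivative DJpi) (at \<theta>)
   \<and> ((\<lambda>t. \<Sum>s\<in>UNIV. \<Sum>a\<in>UNIV. dvisit P mu0 \<gamma> (pi t) s a * residual P \<gamma> r (pi t) qphi s a)
        has_derivative DE) (at \<theta>)
   \<and> (\<forall>s a. ((\<lambda>t. dvisit P mu0 \<gamma> (pi t) s a) has_derivative Dd s a) (at \<theta>))
   \<and> (\<forall>h. DJ h - DJpi h = DE h)
   \<and> (\<forall>h. DJ h - (\<Sum>s\<in>UNIV. dSvisit P mu0 \<gamma> (pi \<theta>) s * (\<Sum>a\<in>UNIV. qphi s a * Dpi s a h))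
          = (\<Sum>s\<in>UNIV. \<Sum>a\<in>UNIV. Dd s a h * residual P \<gamma> r (pi \<theta>) qphi s a))"
proof -
  have "\<forall>s a. \<exists>D. ((\<lambda>t. dvisit P mu0 \<gamma> (pi t) s a) has_derivative D) (at \<theta>)"
    using dvisit_differentiable[OF mdp pol diff] by (simp add: differentiable_def)
  then obtain Dd where Dd: "\<And>s a. ((\<lambda>t. dvisit P mu0 \<gamma> (pi t) s a) has_derivative Dd s a) (at \<theta>)"
    by metis
  define dpi where "dpi h = (\<lambda>s a. Dpi s a h)" for h
  define DE where "DE h = (\<Sum>s\<in>UNIV. \<Sum>a\<in>UNIV.
      dvisit P mu0 \<gamma> (pi \<theta>) s a * (\<gamma> * PPiOp P (dpi h) qphi s a)
      + Dd s a h * residual P \<gamma> r (pi \<theta>) qphi s a)" for h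
  define DJpi where "DJpi h = (1 - \<gamma>) * (\<Sum>s\<in>UNIV. mu0 s * PiOp (dpi h) qphi s)" for h
  have DE: "((\<lambda>t. \<Sum>s\<in>UNIV. \<Sum>a\<in>UNIV. dvisit P mu0 \<gamma> (pi t) s a * residual P \<gamma> r (pi t) qphi s a)
      has_derivative DE) (at \<theta>)"
    unfolding DE_def dpi_def by (intro has_derivative_sum has_derivative_mult Dd has_derivative_residual Dpi)
  have DJpi: "((\<lambda>t. Jpi mu0 \<gamma> (pi t) qphi) has_derivative DJpi) (at \<theta>)"
    unfolding DJpi_def dpi_def by (rule has_derivative_Jpi[OF Dpi])
  have DJ: "((\<lambda>t. Jobj P mu0 \<gamma> r (pi t)) has_derivative (\<lambda>h. DE h + DJpi h)) (at \<theta>)"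
    using has_derivative_add[OF DE DJpi] by (simp add: sum_dvisit_residual[OF mdp pol])
  have "DE h = (\<Sum>s\<in>UNIV. dSvisit P mu0 \<gamma> (pi \<theta>) s * PiOp (dpi h) qphi s) - DJpi h
      + (\<Sum>s\<in>UNIV. \<Sum>a\<in>UNIV. Dd s a h * residual P \<gamma> r (pi \<theta>) qphi s a)" for h
    unfolding DE_def sum.distrib sum_dvisit_PPiOp[OF mdp pol]
    by (simp add: DJpi_def algebra_simps sum_subtractf sum.distrib sum_distrib_left)
  then have "DE h + DJpi h - (\<Sum>s\<in>UNIV. dSvisit P mu0 \<gamma> (pi \<theta>) s * (\<Sum>a\<in>UNIV. qphi s a * Dpi s a h))
      = (\<Sum>s\<in>UNIV. \<Sum>a\<in>UNIV. Dd s a h * residual P \<gamma> r (pi \<theta>) qphi s a)" for h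
    by (simp add: PiOp_def dpi_def mult.commute)
  with DJ DJpi DE Dd show ?thesis
    by (intro exI[of _ "\<lambda>h. DE h + DJpi h"] exI[of _ DJpi] exI[of _ DE] exI[of _ Dd]) auto
qed

end
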